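(* Let $W:\mathbb R\to SO(4)$ be a symmetric loop which is null-homotopic as a loop in $SO(4)$, and suppose some (equivalently every) continuous lift $\tilde W$ of $W$ satisfies $T(\tilde W(0))=-\tilde W(0)$. Choose the lift $\tilde W$ with $\tilde W(0)\in X_1$. Then $\tilde W(\pi)\in X_1\sqcup Y_1$, and $W$ is symmetrically homotopic to the constant loop $k\mapsto \mathrm{diag}(1,-1,1,-1)$ if and only if $\tilde W(\pi)\in X_1$; if $\tilde W(\pi)\in Y_1$, $W$ is not symmetrically homotopic to that constant loop.
   Context: Identify $\mathbb H$ with $\mathbb R^4$ via $x_0+x_1i+x_2j+x_3k\leftrightarrow(x_0,x_1,x_2,x_3)^T$; $Sp(1)$ is the group of unit quaternions, with componentwise product and conjugation on $Sp(1)\times Sp(1)$. Let $p:Sp(1)\times Sp(1)\to SO(4)$ send $(g,h)$ to the matrix of the $\mathbb R$-linear map $x\mapsto g^{-1}xh$ (a two-to-one covering map). Let $w=\begin{pmatrix}0&-I_2\\ I_2&0\end{pmatrix}$ and $\tilde w=(1,j)$, and $T(u,v)=\overline{\tilde w^{-1}(u,v)\tilde w}=(\bar u,\ j^{-1}\bar v j)$. Let $X_1=\{(bi+cj+dk,\ j):b^2+c^2+d^2=1\}$, $Y_1=\{(bi+cj+dk,\ -j):b^2+c^2+d^2=1\}$. A symmetric loop is a continuous $2\pi$-periodic map $W:\mathbb R\to SO(4)$ with $wW(k)w^{-1}=W(-k)^{-1}$ for all $k$. A symmetric homotopy is a continuous $H:\mathbb R\times[0,1]\to SO(4)$ such that $H(\cdot,t)$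 is a symmetric loop for every $t$; two symmetric loops are symmetrically homotopic if they are $H(\cdot,0)$ and $H(\cdot,1)$ for some symmetric homotopy. A lift of $W$ is a continuous $\tilde W:\mathbb R\to Sp(1)\times Sp(1)$ with $p\circ\tilde W=W$. (Physically this is the case of vanishing Fu–Kane–Mele invariant and nonzero partial polarization $\nu_{\Gamma Y}$.) *)

theory Defs
  imports "HOL-Analysis.Analysis"
begin

text \<open>Quaternions identified with real^4: x0 + x1 i + x2 j + x3 k = vector [x0,x1,x2,x3].\<close>

definition qmult :: "real^4 \<Rightarrow> real^4 \<Rightarrow> real^4" where
  "qmult a b = vector
     [a$1*b$1 - a$2*b$2 - a$3*b$3 - a$4*b$4,
      a$1*b$2 + a$2*b$1 + a$3*b$4 - a$4*b$3,
      a$1*b$3 - a$2*b$4 + a$3*b$1 + a$4*b$2,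
      a$1*b$4 + a$2*b$3 - a$3*b$2 + a$4*b$1]"

definition qcnj :: "real^4 \<Rightarrow> real^4" where
  "qcnj a = vector [a$1, - a$2, - a$3, - a$4]"

definition qinv :: "real^4 \<Rightarrow> real^4" where
  "qinv a = (1 / (norm a)^2) *\<^sub>R qcnj a"

definition q1 :: "real^4" where "q1 = vector [1,0,0,0]"
definition qj :: "real^4" where "qj = vector [0,0,1,0]"

definition Sp1 :: "(real^4) set" where "Sp1 = {g. norm g = 1}"

definition SO4 :: "(real^4^4) set" where
  "SO4 = {A. orthogonal_matrix A \<and> det A = 1}"

definition pmap :: "(real^4) \<times> (real^4) \<Rightarrow> real^4^4" where
  "pmap gh = matrix (\<lambda>x. qmult (qmult (qinv (fst gh)) x) (snd gh))"

definition wmat :: "real^4^4" where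
  "wmat = vector [vector [0,0,-1,0], vector [0,0,0,-1],
                  vector [1,0,0,0], vector [0,1,0,0]]"

definition Tmap :: "(real^4) \<times> (real^4) \<Rightarrow> (real^4) \<times> (real^4)" where
  "Tmap uv = (qcnj (fst uv), qmult (qmult (qinv qj) (qcnj (snd uv))) qj)"

definition X1 :: "((real^4) \<times> (real^4)) set" where
  "X1 = {(vector [0,b,c,d], qj) | b c d. b^2 + c^2 + d^2 = 1}"

definition Y1 :: "((real^4) \<times> (real^4)) set" where
  "Y1 = {(vector [0,b,c,d], - qj) | b c d. b^2 + c^2 + d^2 = 1}"

definition symmetric_loop :: "(real \<Rightarrow> real^4^4) \<Rightarrow> bool" where
  "symmetric_loop W \<longleftrightarrow>
     continuous_on UNIV W \<and> W ` UNIV \<subseteq> SO4 \<and>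
     (\<forall>k. W (k + 2*pi) = W k) \<and>
     (\<forall>k. wmat ** W k ** matrix_inv wmat = matrix_inv (W (-k)))"

definition symmetric_homotopy :: "(real \<times> real \<Rightarrow> real^4^4) \<Rightarrow> bool" where
  "symmetric_homotopy H \<longleftrightarrow>
     continuous_on (UNIV \<times> {0..1}) H \<and> (\<forall>t\<in>{0..1}. symmetric_loop (\<lambda>k. H (k, t)))"

definition sym_homotopic :: "(real \<Rightarrow> real^4^4) \<Rightarrow> (real \<Rightarrow> real^4^4) \<Rightarrow> bool" where
  "sym_homotopic W V \<longleftrightarrow>
     (\<exists>H. symmetric_homotopy H \<and> (\<forall>k. H (k,0) = W k) \<and> (\<forall>k. H (k,1) = V k))"

definition null_homotopic_loop :: "(real \<Rightarrow> real^4^4) \<Rightarrow> bool" where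
  "null_homotopic_loop W \<longleftrightarrow>
     homotopic_loops SO4 (\<lambda>t. W (2*pi*t)) (linepath (W 0) (W 0))"

definition is_lift :: "(real \<Rightarrow> (real^4) \<times> (real^4)) \<Rightarrow> (real \<Rightarrow> real^4^4) \<Rightarrow> bool" where
  "is_lift Wt W \<longleftrightarrow> continuous_on UNIV Wt \<and> Wt ` UNIV \<subseteq> Sp1 \<times> Sp1 \<and> (\<forall>k. pmap (Wt k) = W k)"

definition diag1m1 :: "real^4^4" where
  "diag1m1 = vector [vector [1,0,0,0], vector [0,-1,0,0],
                     vector [0,0,1,0], vector [0,0,0,-1]]"

end

theory Submission
  imports Defs
begin

(*
  Lift W through the two-to-one covering p : Sp(1) x Sp(1) -> SO(4). As W is null-homotopic,
  its lift is 2 pi-periodic; as W is symmetric, k |-> -T (lift (-k)) is again a lift and agrees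
  with the given one at 0, so lift (-k) = -T (lift k). At k = pi this forces
  T (lift pi) = - lift pi, i.e. lift pi lies in the fixed set X1 u Y1 of -T, two disjoint
  2-spheres told apart by the sign of the j-component of the second factor.

  A symmetric homotopy lifts to a homotopy of lifts. At k = 0 and k = pi every intermediate
  loop is invariant under k |-> -k, so the lifted paths stay in the fixed points of +-T and
  cannot pass between X1 and Y1. The constant loop diag(1,-1,1,-1) lifts to the constant
  (j, j) in X1, hence lift pi in X1 is necessary. Conversely, if lift pi is in X1, contract the
  path lift|[0,pi] in the simply connected Sp(1) x Sp(1) to (j, j), keeping its ends in the
  2-sphere X1; extending every intermediate path to [-pi, pi] by x (-k) = -T (x k) and
  projecting by p gives a symmetric homotopy to the constant loop.
*)

section \<open>Quaternion arithmetic on real^4\<close>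

lemma vector4_nth [simp]:
  "(vector [a,b,c,d] :: ('a::zero)^4) $ 1 = a"
  "(vector [a,b,c,d] :: ('a::zero)^4) $ 2 = b"
  "(vector [a,b,c,d] :: ('a::zero)^4) $ 3 = c"
  "(vector [a,b,c,d] :: ('a::zero)^4) $ 4 = d"
  unfolding vector_def by simp_all

lemma vec4_eq_iff: "(x::'a^4) = y \<longleftrightarrow> x$1 = y$1 \<and> x$2 = y$2 \<and> x$3 = y$3 \<and> x$4 = y$4"
  by (auto simp: vec_eq_iff forall_4)

definition qi :: "real^4" where "qi = vector [0,1,0,0]"
definition qk :: "real^4" where "qk = vector [0,0,0,1]"

lemma qmult_nth [simp]:
  "qmult a b $ 1 = a$1*b$1 - a$2*b$2 - a$3*b$3 - a$4*b$4"
  "qmult a b $ 2 = a$1*b$2 + a$2*b$1 + a$3*b$4 - a$4*b$3"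
  "qmult a b $ 3 = a$1*b$3 - a$2*b$4 + a$3*b$1 + a$4*b$2"
  "qmult a b $ 4 = a$1*b$4 + a$2*b$3 - a$3*b$2 + a$4*b$1"
  by (simp_all add: qmult_def)

lemma qcnj_nth [simp]:
  "qcnj a $ 1 = a$1" "qcnj a $ 2 = - a$2" "qcnj a $ 3 = - a$3" "qcnj a $ 4 = - a$4"
  by (simp_all add: qcnj_def)

lemma q1_nth [simp]: "q1$1 = 1" "q1$2 = 0" "q1$3 = 0" "q1$4 = 0"
  and qi_nth [simp]: "qi$1 = 0" "qi$2 = 1" "qi$3 = 0" "qi$4 = 0"
  and qj_nth [simp]: "qj$1 = 0" "qj$2 = 0" "qj$3 = 1" "qj$4 = 0"
  and qk_nth [simp]: "qk$1 = 0" "qk$2 = 0" "qk$3 = 0" "qk$4 = 1"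
  by (simp_all add: q1_def qi_def qj_def qk_def)

lemma inner_vec4: "(x::real^4) \<bullet> y = x$1*y$1 + x$2*y$2 + x$3*y$3 + x$4*y$4"
  by (simp add: inner_vec_def sum_4)

lemma norm_vec4_power2: "(norm (x::real^4))^2 = x$1^2 + x$2^2 + x$3^2 + x$4^2"
  by (simp only: power2_norm_eq_inner inner_vec4) (simp add: power2_eq_square)

lemma unit_vec4_sum_squares: "norm (a::real^4) = 1 \<Longrightarrow> a$1^2 + a$2^2 + a$3^2 + a$4^2 = 1"
  using norm_vec4_power2[of a] by simp

lemma norm_q1 [simp]: "norm q1 = 1"
  and norm_qi [simp]: "norm qi = 1"
  and norm_qj [simp]: "norm qj = 1"
  by (simp_all add: norm_eq_sqrt_inner inner_vec4)

lemma qmult_assoc: "qmult (qmult a b) c = qmult a (qmult b c)"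
  by (simp add: vec4_eq_iff algebra_simps)

lemma qmult_q1 [simp]: "qmult q1 a = a" "qmult a q1 = a"
  by (simp_all add: vec4_eq_iff)

lemma qcnj_qcnj [simp]: "qcnj (qcnj a) = a"
  and qcnj_q1 [simp]: "qcnj q1 = q1"
  and qcnj_uminus: "qcnj (- a) = - qcnj a"
  by (simp_all add: vec4_eq_iff)

lemma qcnj_qmult: "qcnj (qmult a b) = qmult (qcnj b) (qcnj a)"
  by (simp add: vec4_eq_iff algebra_simps)

lemma norm_qcnj [simp]: "norm (qcnj a) = norm a"
proof -
  have "(norm (qcnj a))^2 = (norm a)^2" by (simp add: norm_vec4_power2)
  then show ?thesis by simp
qed

lemma norm_qmult: "norm (qmult a b) = norm a * norm b"
proof -
  have "(norm (qmult a b))^2 = (norm a * norm b)^2"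
    unfolding power_mult_distrib norm_vec4_power2 by (simp add: power2_eq_square) algebra
  then show ?thesis by simp
qed

lemma qmult_qcnj_unit:
  assumes "norm a = 1"
  shows "qmult a (qcnj a) = q1" "qmult (qcnj a) a = q1"
  using unit_vec4_sum_squares[OF assms]
  by (simp_all add: vec4_eq_iff power2_eq_square algebra_simps)

lemma qinv_unit: "norm a = 1 \<Longrightarrow> qinv a = qcnj a"
  by (simp add: qinv_def)

lemma qmult_add_left: "qmult (x + y) b = qmult x b + qmult y b"
  and qmult_add_right: "qmult a (x + y) = qmult a x + qmult a y"
  and qmult_scaleR_left: "qmult (c *\<^sub>R x) b = c *\<^sub>R qmult x b"
  and qmult_scaleR_right: "qmult a (c *\<^sub>R y) = c *\<^sub>R qmult a y"
  and qmult_uminus_left: "qmult (- x) b = - qmult x b"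
  and qmult_uminus_right: "qmult a (- y) = - qmult a y"
  by (simp_all add: vec4_eq_iff algebra_simps)

lemma continuous_on_qmult [continuous_intros]:
  assumes "continuous_on S f" "continuous_on S g"
  shows "continuous_on S (\<lambda>x. qmult (f x) (g x))"
proof -
  have "continuous_on S (\<lambda>x. qmult (f x) (g x) $ i)" for i
    using exhaust_4[of i] by (elim disjE) (simp_all, (intro continuous_intros assms)+)
  then show ?thesis by (rule continuous_on_vec_lambda[where f = "\<lambda>i x. qmult (f x) (g x) $ i", simplified])
qed

lemma continuous_on_qcnj [continuous_intros]:
  assumes "continuous_on S f"
  shows "continuous_on S (\<lambda>x. qcnj (f x))"
proof -
  have "continuous_on S (\<lambda>x. qcnj (f x) $ i)" for i
    using exhaust_4[of i] by (elim disjE) (simp_all, (intro continuous_intros assms)+)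
  then show ?thesis by (rule continuous_on_vec_lambda[where f = "\<lambda>i x. qcnj (f x) $ i", simplified])
qed

lemma continuous_on_qinv [continuous_intros]:
  assumes "continuous_on S f" "\<And>x. x \<in> S \<Longrightarrow> f x \<noteq> 0"
  shows "continuous_on S (\<lambda>x. qinv (f x))"
  unfolding qinv_def using assms by (intro continuous_intros) auto

section \<open>The covering map Sp(1) \<times> Sp(1) \<rightarrow> SO(4)\<close>

lemma pmap_apply: "pmap (g,h) *v x = qmult (qmult (qinv g) x) h"
proof -
  have "linear (\<lambda>x. qmult (qmult (qinv g) x) h)"
    by (rule linearI)
      (simp_all add: qmult_add_left qmult_add_right qmult_scaleR_left qmult_scaleR_right)
  then show ?thesis
    unfolding pmap_def by (simp add: matrix_works linear_def scalar_mult_eq_scaleR)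
qed

lemma pmap_apply_unit: "norm g = 1 \<Longrightarrow> pmap (g,h) *v x = qmult (qmult (qcnj g) x) h"
  by (simp add: pmap_apply qinv_unit)

lemma pmap_mult:
  assumes "norm g = 1" "norm g' = 1"
  shows "pmap (g,h) ** pmap (g',h') = pmap (qmult g' g, qmult h' h)"
  using assms by (simp add: matrix_eq matrix_vector_mul_assoc[symmetric] pmap_apply_unit norm_qmult
      qcnj_qmult qmult_assoc)

lemma pmap_q1: "pmap (q1,q1) = mat 1"
  by (simp add: matrix_eq pmap_apply_unit)

lemma pmap_mult_pmap_qcnj:
  assumes "norm g = 1" "norm h = 1"
  shows "pmap (g,h) ** pmap (qcnj g, qcnj h) = mat 1" "pmap (qcnj g, qcnj h) ** pmap (g,h) = mat 1"
  using assms by (simp_all add: pmap_mult qmult_qcnj_unit pmap_q1)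

lemma matrix_inv_unique:
  fixes A B :: "real^'n^'n"
  assumes "A ** B = mat 1"
  shows "matrix_inv A = B"
proof -
  have "B ** A = mat 1" using assms matrix_left_right_inverse by blast
  with assms have "A ** matrix_inv A = mat 1 \<and> matrix_inv A ** A = mat 1"
    unfolding matrix_inv_def by (intro someI_ex[of "\<lambda>A'. A ** A' = mat 1 \<and> A' ** A = mat 1"]) blast
  then have "matrix_inv A = matrix_inv A ** (A ** B)" "matrix_inv A ** A = mat 1"
    by (simp_all add: assms)
  then show ?thesis by (simp add: matrix_mul_assoc)
qed

lemma matrix_inv_pmap:
  "norm g = 1 \<Longrightarrow> norm h = 1 \<Longrightarrow> matrix_inv (pmap (g,h)) = pmap (qcnj g, qcnj h)"
  by (rule matrix_inv_unique, rule pmap_mult_pmap_qcnj)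

lemma pmap_uminus: "pmap (- x) = pmap x"
  by (cases x) (simp add: matrix_eq pmap_apply qinv_def qcnj_uminus qmult_uminus_left
      qmult_uminus_right qmult_scaleR_left)

lemma orthogonal_matrix_pmap:
  assumes "norm g = 1" "norm h = 1"
  shows "orthogonal_matrix (pmap (g,h))"
proof -
  have "orthogonal_transformation (\<lambda>x. pmap (g,h) *v x)"
    unfolding orthogonal_transformation using assms
    by (simp add: pmap_apply_unit norm_qmult matrix_vector_mul_linear)
  then show ?thesis
    using orthogonal_transformation_matrix[of "\<lambda>x. pmap (g,h) *v x"] by simp
qed

lemma pmap_entries:
  "pmap gh = (\<chi> i j. qmult (qmult (qinv (fst gh)) (axis j 1)) (snd gh) $ i)"
  by (simp add: pmap_def matrix_def)

lemma continuous_on_pmap: "continuous_on (Sp1 \<times> Sp1) pmap"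
proof -
  have "continuous_on (Sp1 \<times> Sp1)
      (\<lambda>gh. \<chi> i j. qmult (qmult (qinv (fst gh)) (axis j 1)) (snd gh) $ i)"
    by (intro continuous_intros) (auto simp: Sp1_def)
  then show ?thesis unfolding pmap_entries[abs_def] .
qed

lemma Sp1_eq_sphere: "Sp1 = sphere 0 1"
  by (auto simp: Sp1_def)

lemma uminus_in_Sp1 [simp]: "- g \<in> Sp1 \<longleftrightarrow> g \<in> Sp1"
  by (simp add: Sp1_def)

lemma uminus_in_Sp1_Times [simp]: "- x \<in> Sp1 \<times> Sp1 \<longleftrightarrow> x \<in> Sp1 \<times> Sp1"
  by (cases x) simp

text \<open>The determinant is \<open>\<plusminus>1\<close> on the connected set Sp(1) \<times> Sp(1), and 1 at the identity.\<close>
lemma det_pmap: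
  assumes "x \<in> Sp1 \<times> Sp1"
  shows "det (pmap x) = 1"
proof -
  let ?d = "\<lambda>x. det (pmap x)"
  have "continuous_on (Sp1 \<times> Sp1) ?d"
    unfolding det_def by (intro continuous_intros continuous_on_compose2[OF continuous_on_pmap]) auto
  moreover have "connected (Sp1 \<times> Sp1)"
    by (simp add: Sp1_eq_sphere connected_Times connected_sphere)
  moreover have "?d ` (Sp1 \<times> Sp1) \<subseteq> {1, -1}"
  proof
    fix y assume "y \<in> ?d ` (Sp1 \<times> Sp1)"
    then obtain g h where "y = det (pmap (g,h))" "norm g = 1" "norm h = 1"
      by (auto simp: Sp1_def)
    then show "y \<in> {1, -1}"
      using det_orthogonal_matrix[OF orthogonal_matrix_pmap] by auto
  qed
  ultimately have "?d constant_on (Sp1 \<times> Sp1)"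
    by (intro continuous_finite_range_constant) (auto intro: finite_subset)
  then obtain c where c: "\<And>y. y \<in> Sp1 \<times> Sp1 \<Longrightarrow> ?d y = c"
    unfolding constant_on_def by blast
  have "(q1,q1) \<in> Sp1 \<times> Sp1" by (simp add: Sp1_def)
  with c[of "(q1,q1)"] c[OF assms] show ?thesis by (simp add: pmap_q1)
qed

lemma pmap_in_SO4: "x \<in> Sp1 \<times> Sp1 \<Longrightarrow> pmap x \<in> SO4"
  using det_pmap orthogonal_matrix_pmap by (cases x) (auto simp: SO4_def Sp1_def)

lemma SO4_mult: "A \<in> SO4 \<Longrightarrow> B \<in> SO4 \<Longrightarrow> A ** B \<in> SO4"
  by (simp add: SO4_def orthogonal_matrix_mul det_mul)

lemma unit_real_quaternion:
  assumes "norm u = 1" "u$2 = 0" "u$3 = 0" "u$4 = 0"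
  shows "u = q1 \<or> u = - q1"
proof -
  have "u$1^2 = 1" using unit_vec4_sum_squares[OF assms(1)] assms by simp
  then show ?thesis using assms by (auto simp: vec4_eq_iff power2_eq_1_iff)
qed

text \<open>If \<open>g\<^sup>-\<^sup>1 x h = g'\<^sup>-\<^sup>1 x h'\<close> for all \<open>x\<close>, then \<open>u = g' g\<^sup>-\<^sup>1\<close> is central, hence real.\<close>
lemma pmap_eq_imp_eq_or_uminus:
  assumes "norm g = 1" "norm h = 1" "norm g' = 1" "norm h' = 1"
    and eq: "pmap (g,h) = pmap (g',h')"
  shows "(g',h') = (g,h) \<or> (g',h') = - (g,h)"
proof -
  define u where "u = qmult g' (qcnj g)"
  have U: "qmult (qmult u x) h = qmult x h'" for x
  proof -
    have "qmult (qmult u x) h = qmult g' (qmult (qmult (qcnj g) x) h)"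
      by (simp add: u_def qmult_assoc)
    also have "\<dots> = qmult g' (qmult (qmult (qcnj g') x) h')"
      using eq assms by (metis pmap_apply_unit)
    also have "\<dots> = qmult x h'"
      using qmult_qcnj_unit[OF assms(3)] by (simp flip: qmult_assoc)
    finally show ?thesis .
  qed
  have h': "h' = qmult u h" using U[of q1] by simp
  have central: "qmult u x = qmult x u" for x
  proof -
    have "qmult (qmult u x) h = qmult (qmult x u) h" using U[of x] by (simp add: h' qmult_assoc)
    then have "qmult (qmult (qmult u x) h) (qcnj h) = qmult (qmult (qmult x u) h) (qcnj h)" by simp
    then show ?thesis using qmult_qcnj_unit[OF assms(2)] by (simp add: qmult_assoc)
  qed
  have "u$2 = 0" "u$3 = 0" "u$4 = 0"
    using central[of qi] central[of qj] by (auto simp: vec4_eq_iff)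
  then have "u = q1 \<or> u = - q1"
    using unit_real_quaternion assms by (simp add: u_def norm_qmult)
  moreover have "g' = qmult u g"
    using qmult_qcnj_unit[OF assms(1)] by (simp add: u_def qmult_assoc)
  ultimately show ?thesis using h' by (auto simp: qmult_uminus_left)
qed

lemma pmap_eq_iff:
  assumes "x \<in> Sp1 \<times> Sp1" "y \<in> Sp1 \<times> Sp1"
  shows "pmap x = pmap y \<longleftrightarrow> y = x \<or> y = - x"
  using pmap_eq_imp_eq_or_uminus[of "fst x" "snd x" "fst y" "snd y"] assms pmap_uminus[of x]
  by (cases x, cases y) (auto simp: Sp1_def)

lemma orthogonal_matrix_inner:
  assumes "orthogonal_matrix (A::real^'n^'n)"
  shows "(A *v x) \<bullet> (A *v y) = x \<bullet> y"
  using assms orthogonal_transformation_matrix[of "\<lambda>x. A *v x"]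
  by (simp add: orthogonal_transformation_def)

lemma SO4_inner: "A \<in> SO4 \<Longrightarrow> (A *v x) \<bullet> (A *v y) = x \<bullet> y"
  by (simp add: SO4_def orthogonal_matrix_inner)

lemma SO4_norm: "A \<in> SO4 \<Longrightarrow> norm (A *v x) = norm x"
  by (simp add: norm_eq_sqrt_inner SO4_inner)

lemma pmap_diag_apply_q1: "norm g = 1 \<Longrightarrow> pmap (g,g) *v q1 = q1"
  by (simp add: pmap_apply_unit qmult_qcnj_unit)

lemma pmap_diag_apply_conj:
  assumes "norm g = 1" "qmult u g = qmult g v"
  shows "pmap (g,g) *v u = v"
proof -
  have "pmap (g,g) *v u = qmult (qcnj g) (qmult g v)"
    using assms by (simp add: pmap_apply_unit qmult_assoc)
  then show ?thesis
    using assms(1) by (simp flip: qmult_assoc add: qmult_qcnj_unit)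
qed

text \<open>\<open>r = u + i\<close> rotates the imaginary unit \<open>u\<close> onto \<open>i\<close>, unless \<open>u = -i\<close>.\<close>
lemma conjugate_to_qi:
  assumes "norm u = 1" "u$1 = 0"
  obtains g where "norm g = 1" "qmult u g = qmult g qi"
proof (cases "u = - qi")
  case True
  then show ?thesis by (intro that[of qj]) (simp_all add: vec4_eq_iff)
next
  case False
  define r where "r = u + qi"
  have "r \<noteq> 0" using False by (metis add_eq_0_iff2 r_def)
  moreover have "qmult u r = qmult r qi"
    using unit_vec4_sum_squares[OF assms(1)] assms(2)
    by (simp add: r_def vec4_eq_iff power2_eq_square algebra_simps)
  ultimately show ?thesis
    by (intro that[of "(1 / norm r) *\<^sub>R r"]) (simp_all add: qmult_scaleR_left qmult_scaleR_right)
qed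

text \<open>A rotation about the \<open>i\<close>-axis, \<open>r = 1 + v$3 + v$4 i\<close>, moves \<open>v \<perp> 1, i\<close> onto \<open>j\<close>.\<close>
lemma conjugate_to_qj:
  assumes "norm v = 1" "v$1 = 0" "v$2 = 0"
  obtains g where "norm g = 1" "g$3 = 0" "g$4 = 0" "qmult v g = qmult g qj"
proof (cases "v$3 = -1")
  case True
  have "v$4 = 0" using unit_vec4_sum_squares[OF assms(1)] assms True by (simp add: power2_eq_square)
  then show ?thesis using True assms by (intro that[of qi]) (simp_all add: vec4_eq_iff)
next
  case False
  define r :: "real^4" where "r = vector [1 + v$3, v$4, 0, 0]"
  have "r \<noteq> 0" using False by (auto simp: r_def vec4_eq_iff)
  moreover have "qmult v r = qmult r qj"
    using unit_vec4_sum_squares[OF assms(1)] assms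
    by (simp add: r_def vec4_eq_iff power2_eq_square algebra_simps)
  ultimately show ?thesis
    by (intro that[of "(1 / norm r) *\<^sub>R r"])
      (simp_all add: qmult_scaleR_left qmult_scaleR_right r_def)
qed

lemma prod_UNIV_4: "prod f (UNIV::4 set) = f 1 * f 2 * f 3 * f 4"
  unfolding UNIV_4 by (simp add: ac_simps)

lemma SO4_fixing_q1_qi_qj_eq_mat1:
  assumes A: "A \<in> SO4" and fixed: "A *v q1 = q1" "A *v qi = qi" "A *v qj = qj"
  shows "A = mat 1"
proof -
  define w where "w = A *v qk"
  have wA: "w \<bullet> (A *v x) = qk \<bullet> x" for x
    using SO4_inner[OF A] by (simp add: w_def)
  have w123: "w$1 = 0" "w$2 = 0" "w$3 = 0"
    using wA[of q1] wA[of qi] wA[of qj] by (simp_all add: fixed inner_vec4)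
  define D :: "real^4^4" where "D = (\<chi> i j. if i = j then (if i = 4 then w$4 else 1) else 0)"
  have "A = D"
    unfolding matrix_eq
  proof
    fix x
    have "A *v x = A *v (x$1 *\<^sub>R q1 + x$2 *\<^sub>R qi + x$3 *\<^sub>R qj + x$4 *\<^sub>R qk)"
      by (rule arg_cong[where f = "(*v) A"]) (simp add: vec4_eq_iff)
    also have "\<dots> = x$1 *\<^sub>R q1 + x$2 *\<^sub>R qi + x$3 *\<^sub>R qj + x$4 *\<^sub>R w"
      by (simp add: matrix_vector_right_distrib matrix_vector_mult_scaleR fixed w_def)
    also have "\<dots> = D *v x"
      using w123 by (simp add: vec4_eq_iff matrix_vector_mult_def sum_4 D_def)
    finally show "A *v x = D *v x" .
  qed
  moreover have "det D = w$4"
    unfolding D_def by (subst det_diagonal) (auto simp: prod_UNIV_4)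
  ultimately have "w$4 = 1" using A by (simp add: SO4_def)
  then have "D = mat 1"
    by (simp add: D_def mat_def vec_eq_iff)
  with \<open>A = D\<close> show ?thesis by simp
qed

lemma pmap_image_mult_cancel:
  assumes xA: "pmap x ** A \<in> pmap ` (Sp1 \<times> Sp1)" and x: "x \<in> Sp1 \<times> Sp1"
  shows "A \<in> pmap ` (Sp1 \<times> Sp1)"
proof -
  obtain g h where gh: "x = (g,h)" "norm g = 1" "norm h = 1"
    using x by (cases x) (auto simp: Sp1_def)
  obtain a b where ab: "pmap x ** A = pmap (a,b)" "norm a = 1" "norm b = 1"
    using xA by (auto simp: Sp1_def)
  have "A = pmap (qcnj g, qcnj h) ** (pmap (g,h) ** A)"
    using gh by (simp add: matrix_mul_assoc pmap_mult_pmap_qcnj)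
  also have "\<dots> = pmap (qmult a (qcnj g), qmult b (qcnj h))"
    using ab gh by (simp add: pmap_mult)
  finally show ?thesis
    using ab gh by (auto simp: Sp1_def norm_qmult)
qed

lemma mat1_in_pmap_image: "mat 1 \<in> pmap ` (Sp1 \<times> Sp1)"
  by (rule image_eqI[of _ _ "(q1,q1)"]) (simp_all add: pmap_q1 Sp1_def)

lemma SO4_fixing_q1_qi_in_pmap_image:
  assumes A: "A \<in> SO4" and fixed: "A *v q1 = q1" "A *v qi = qi"
  shows "A \<in> pmap ` (Sp1 \<times> Sp1)"
proof -
  define v where "v = A *v qj"
  have vA: "v \<bullet> (A *v x) = qj \<bullet> x" for x
    using SO4_inner[OF A] by (simp add: v_def)
  have "norm v = 1" "v$1 = 0" "v$2 = 0"
    using SO4_norm[OF A, of qj] vA[of q1] vA[of qi] by (simp_all add: v_def fixed inner_vec4)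
  then obtain g where g: "norm g = 1" "g$3 = 0" "g$4 = 0" "qmult v g = qmult g qj"
    by (rule conjugate_to_qj)
  let ?B = "pmap (g,g) ** A"
  have "?B *v qi = qi"
    using g unit_vec4_sum_squares[OF g(1)]
    by (simp add: fixed pmap_apply_unit vec4_eq_iff power2_eq_square algebra_simps
        flip: matrix_vector_mul_assoc)
  moreover have "?B *v q1 = q1" "?B *v qj = qj"
    using pmap_diag_apply_q1[OF g(1)] pmap_diag_apply_conj[OF g(1,4)]
    by (simp_all add: fixed v_def flip: matrix_vector_mul_assoc)
  moreover have "?B \<in> SO4"
    using g(1) by (intro SO4_mult pmap_in_SO4 A) (simp add: Sp1_def)
  ultimately have "?B = mat 1"
    by (intro SO4_fixing_q1_qi_qj_eq_mat1)
  then have "?B \<in> pmap ` (Sp1 \<times> Sp1)"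
    by (simp add: mat1_in_pmap_image)
  then show ?thesis
    by (rule pmap_image_mult_cancel) (simp add: g(1) Sp1_def)
qed

lemma SO4_fixing_q1_in_pmap_image:
  assumes A: "A \<in> SO4" and fixed: "A *v q1 = q1"
  shows "A \<in> pmap ` (Sp1 \<times> Sp1)"
proof -
  define u where "u = A *v qi"
  have "norm u = 1" "u$1 = 0"
    using SO4_norm[OF A, of qi] SO4_inner[OF A, of qi q1] fixed by (simp_all add: u_def inner_vec4)
  then obtain g where g: "norm g = 1" "qmult u g = qmult g qi"
    by (rule conjugate_to_qi)
  then have "pmap (g,g) ** A \<in> pmap ` (Sp1 \<times> Sp1)"
    using fixed pmap_diag_apply_q1[OF g(1)] pmap_diag_apply_conj[OF g]
    by (intro SO4_fixing_q1_qi_in_pmap_image SO4_mult pmap_in_SO4 A)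
      (simp_all add: Sp1_def flip: matrix_vector_mul_assoc u_def)
  then show ?thesis
    by (rule pmap_image_mult_cancel) (simp add: g(1) Sp1_def)
qed

lemma pmap_image: "pmap ` (Sp1 \<times> Sp1) = SO4"
proof
  show "pmap ` (Sp1 \<times> Sp1) \<subseteq> SO4" using pmap_in_SO4 by blast
  show "SO4 \<subseteq> pmap ` (Sp1 \<times> Sp1)"
  proof
    fix A assume A: "A \<in> SO4"
    define q where "q = A *v q1"
    have q: "norm q = 1" using SO4_norm[OF A, of q1] by (simp add: q_def)
    have "pmap (q1, qcnj q) *v q = q1"
      using q by (simp add: pmap_apply_unit qmult_qcnj_unit)
    with q have "pmap (q1, qcnj q) ** A \<in> pmap ` (Sp1 \<times> Sp1)"
      by (intro SO4_fixing_q1_in_pmap_image SO4_mult pmap_in_SO4 A)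
        (simp_all add: Sp1_def flip: matrix_vector_mul_assoc q_def)
    then show "A \<in> pmap ` (Sp1 \<times> Sp1)"
      by (rule pmap_image_mult_cancel) (simp add: q Sp1_def)
  qed
qed

lemma neq_uminus_self: "x \<noteq> 0 \<Longrightarrow> x \<noteq> - (x::'a::real_vector)"
  by (metis add_eq_0_iff2 scaleR_2 scaleR_eq_0_iff zero_neq_numeral)

lemma openin_nonzero_on_preimage:
  assumes "continuous_on S p" "p ` S = U" "openin (top_of_set U) V"
    and "continuous_on (S \<inter> p -` V) f"
  shows "openin (top_of_set S) {x \<in> S \<inter> p -` V. f x \<noteq> (0::'a::real_normed_vector)}"
proof -
  have "openin (top_of_set S) (S \<inter> p -` V)"
    using assms(1-3) by (auto intro: continuous_openin_preimage)
  moreover have "{x \<in> S \<inter> p -` V. f x \<noteq> 0} = (S \<inter> p -` V) \<inter> f -` (- {0})"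
    by auto
  ultimately show ?thesis
    using continuous_openin_preimage_gen[OF assms(4), of "- {0}"] openin_trans
    by (metis open_Compl closed_singleton)
qed

context
  fixes p :: "'a::real_normed_vector \<Rightarrow> 'b::topological_space" and S :: "'a set"
  assumes nz: "0 \<notin> S" and neg: "\<And>x. x \<in> S \<Longrightarrow> - x \<in> S"
    and fibre: "\<And>x y. x \<in> S \<Longrightarrow> y \<in> S \<Longrightarrow> p x = p y \<longleftrightarrow> y = x \<or> y = - x"
begin

text \<open>Over the domain \<open>V\<close> of a section \<open>\<sigma>\<close> of the two-to-one map \<open>x, -x \<mapsto> p x\<close>, the
  preimage splits into the sheets where \<open>\<sigma>\<close> returns \<open>x\<close>, resp. \<open>-x\<close>.\<close>
lemma antipodal_section_sheets:
  assumes \<sigma>S: "\<sigma> ` V \<subseteq> S" and p\<sigma>: "\<forall>B\<in>V. p (\<sigma> B) = B"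
  shows "\<sigma> ` V = {x \<in> S \<inter> p -` V. \<sigma> (p x) + x \<noteq> 0}"
    and "(\<lambda>B. - \<sigma> B) ` V = {x \<in> S \<inter> p -` V. \<sigma> (p x) - x \<noteq> 0}"
    and "\<sigma> ` V \<union> (\<lambda>B. - \<sigma> B) ` V = S \<inter> p -` V"
    and "disjnt (\<sigma> ` V) ((\<lambda>B. - \<sigma> B) ` V)"
proof -
  have \<sigma>p: "\<sigma> (p x) = x \<or> \<sigma> (p x) = - x" if "x \<in> S \<inter> p -` V" for x
    using that fibre[of x "\<sigma> (p x)"] \<sigma>S p\<sigma> by auto
  have ne: "x \<noteq> - x" if "x \<in> S" for x
    using that nz by (intro neq_uminus_self) auto
  have pneg: "p (- x) = p x" if "x \<in> S" for x
    using fibre[of x "- x"] neg that by simp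
  have V1: "\<sigma> ` V = {x \<in> S \<inter> p -` V. \<sigma> (p x) = x}"
    using \<sigma>S p\<sigma> by (auto simp: image_iff) metis
  have V2: "(\<lambda>B. - \<sigma> B) ` V = {x \<in> S \<inter> p -` V. \<sigma> (p x) = - x}"
    using \<sigma>S p\<sigma> neg pneg by (auto simp: image_iff) (metis minus_minus)
  show "\<sigma> ` V = {x \<in> S \<inter> p -` V. \<sigma> (p x) + x \<noteq> 0}"
    using \<sigma>p ne by (auto simp: V1 eq_neg_iff_add_eq_0)
  show "(\<lambda>B. - \<sigma> B) ` V = {x \<in> S \<inter> p -` V. \<sigma> (p x) - x \<noteq> 0}"
    using \<sigma>p ne by (auto simp: V2)
  show "\<sigma> ` V \<union> (\<lambda>B. - \<sigma> B) ` V = S \<inter> p -` V"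
    using \<sigma>p by (auto simp: V1 V2)
  show "disjnt (\<sigma> ` V) ((\<lambda>B. - \<sigma> B) ` V)"
    using ne by (fastforce simp: disjnt_def V1 V2)
qed

lemma covering_space_antipodal:
  assumes contp: "continuous_on S p" and img: "p ` S = U"
    and sections: "\<And>A. A \<in> U \<Longrightarrow> \<exists>V \<sigma>. A \<in> V \<and> openin (top_of_set U) V \<and>
        continuous_on V \<sigma> \<and> \<sigma> ` V \<subseteq> S \<and> (\<forall>B\<in>V. p (\<sigma> B) = B)"
  shows "covering_space S p U"
proof (rule covering_spaceI[OF contp img])
  fix A assume "A \<in> U"
  then obtain V \<sigma> where A: "A \<in> V" and V: "openin (top_of_set U) V"
    and cont: "continuous_on V \<sigma>" and \<sigma>S: "\<sigma> ` V \<subseteq> S" and p\<sigma>: "\<forall>B\<in>V. p (\<sigma> B) = B"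
    using sections by metis
  note sheets = antipodal_section_sheets[OF \<sigma>S p\<sigma>]
  have pneg: "p (- x) = p x" if "x \<in> S" for x
    using fibre[of x "- x"] neg that by simp
  have cont\<sigma>p: "continuous_on (S \<inter> p -` V) (\<lambda>x. \<sigma> (p x))"
    by (intro continuous_on_compose2[OF cont] continuous_on_subset[OF contp]) auto
  show "\<exists>T. A \<in> T \<and> openin (top_of_set U) T \<and>
          (\<exists>v. \<Union>v = S \<inter> p -` T \<and> (\<forall>u\<in>v. openin (top_of_set S) u) \<and>
               pairwise disjnt v \<and> (\<forall>u\<in>v. \<exists>q. homeomorphism u T p q))"
  proof (intro exI conjI)
    show "\<Union>{\<sigma> ` V, (\<lambda>B. - \<sigma> B) ` V} = S \<inter> p -` V"
      using sheets(3) by simp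
    have "openin (top_of_set S) (\<sigma> ` V)"
      by (subst sheets(1), rule openin_nonzero_on_preimage[OF contp img V])
        (intro continuous_intros cont\<sigma>p)
    moreover have "openin (top_of_set S) ((\<lambda>B. - \<sigma> B) ` V)"
      by (subst sheets(2), rule openin_nonzero_on_preimage[OF contp img V])
        (intro continuous_intros cont\<sigma>p)
    ultimately show "\<forall>u\<in>{\<sigma> ` V, (\<lambda>B. - \<sigma> B) ` V}. openin (top_of_set S) u"
      by simp
    show "pairwise disjnt {\<sigma> ` V, (\<lambda>B. - \<sigma> B) ` V}"
      using sheets(4) by (simp add: pairwise_insert disjnt_sym)
    have "homeomorphism (\<sigma> ` V) V p \<sigma>"
      by (rule homeomorphismI) (use cont contp \<sigma>S p\<sigma> in \<open>auto intro: continuous_on_subset\<close>)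
    moreover have "homeomorphism ((\<lambda>B. - \<sigma> B) ` V) V p (\<lambda>B. - \<sigma> B)"
      by (rule homeomorphismI)
        (use cont contp \<sigma>S p\<sigma> neg pneg in \<open>auto intro!: continuous_intros intro: continuous_on_subset\<close>)
    ultimately show "\<forall>u\<in>{\<sigma> ` V, (\<lambda>B. - \<sigma> B) ` V}. \<exists>q. homeomorphism u V p q"
      by blast
  qed (use A V in auto)
qed

end

text \<open>The entries of \<open>pmap (g,h)\<close> are bilinear in \<open>(g,h)\<close>; this linear map inverts
  \<open>g h\<^sup>T \<mapsto> pmap (g,h)\<close>.\<close>
definition outer_factors :: "real^4^4 \<Rightarrow> real^4^4" where
  "outer_factors A = vector [
    vector [(A$1$1 + A$2$2 + A$3$3 + A$4$4) / 4, (- A$1$2 + A$2$1 + A$3$4 - A$4$3) / 4,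
            (- A$1$3 - A$2$4 + A$3$1 + A$4$2) / 4, (- A$1$4 + A$2$3 - A$3$2 + A$4$1) / 4],
    vector [(A$1$2 - A$2$1 + A$3$4 - A$4$3) / 4, (A$1$1 + A$2$2 - A$3$3 - A$4$4) / 4,
            (- A$1$4 + A$2$3 + A$3$2 - A$4$1) / 4, (A$1$3 + A$2$4 + A$3$1 + A$4$2) / 4],
    vector [(A$1$3 - A$2$4 - A$3$1 + A$4$2) / 4, (A$1$4 + A$2$3 + A$3$2 + A$4$1) / 4,
            (A$1$1 - A$2$2 + A$3$3 - A$4$4) / 4, (- A$1$2 - A$2$1 + A$3$4 + A$4$3) / 4],
    vector [(A$1$4 + A$2$3 - A$3$2 - A$4$1) / 4, (- A$1$3 + A$2$4 - A$3$1 + A$4$2) / 4,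
            (A$1$2 + A$2$1 + A$3$4 + A$4$3) / 4, (A$1$1 - A$2$2 - A$3$3 + A$4$4) / 4]]"

lemma outer_factors_pmap:
  assumes "norm g = 1"
  shows "outer_factors (pmap (g,h)) = (\<chi> c d. g$c * h$d)"
  using assms unfolding outer_factors_def pmap_entries
  by (simp add: vec4_eq_iff qinv_unit axis_def algebra_simps)

lemma outer_factors_pmap_apply:
  assumes "norm g = 1"
  shows "outer_factors (pmap (g,h)) *v y = (h \<bullet> y) *\<^sub>R g"
    and "y v* outer_factors (pmap (g,h)) = (g \<bullet> y) *\<^sub>R h"
  using assms
  by (simp_all add: outer_factors_pmap vec4_eq_iff matrix_vector_mult_def vector_matrix_mult_def
      sum_4 inner_vec4 algebra_simps)

lemma linear_outer_factors: "linear outer_factors"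
  by (rule linearI)
    (simp_all add: outer_factors_def vec4_eq_iff algebra_simps add_divide_distrib diff_divide_distrib)

lemma continuous_on_outer_factors [continuous_intros]:
  "continuous_on S f \<Longrightarrow> continuous_on S (\<lambda>x. outer_factors (f x))"
  using linear_outer_factors linear_continuous_on linear_conv_bounded_linear
  by (blast intro: continuous_on_compose2[of UNIV outer_factors])

lemma continuous_on_matrix_vector_mult [continuous_intros]:
  fixes f :: "_ \<Rightarrow> real^'n^'m"
  shows "continuous_on S f \<Longrightarrow> continuous_on S g \<Longrightarrow> continuous_on S (\<lambda>x. f x *v g x)"
  unfolding matrix_vector_mult_def by (intro continuous_intros)

lemma continuous_on_vector_matrix_mult [continuous_intros]:
  fixes f :: "_ \<Rightarrow> real^'n^'m"
  shows "continuous_on S g \<Longrightarrow> continuous_on S f \<Longrightarrow> continuous_on S (\<lambda>x. g x v* f x)"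
  unfolding vector_matrix_mult_def by (intro continuous_intros)

text \<open>Near \<open>pmap (g\<^sub>0,h\<^sub>0)\<close>, the factor \<open>g\<close> is read off \<open>g h\<^sup>T h\<^sub>0\<close>, normalised
  and with its sign fixed by \<open>g \<bullet> g\<^sub>0 > 0\<close>; then \<open>h = g\<^sup>T (g h\<^sup>T)\<close>.\<close>
definition pmap_section :: "real^4 \<Rightarrow> real^4 \<Rightarrow> real^4^4 \<Rightarrow> (real^4) \<times> (real^4)" where
  "pmap_section g0 h0 A =
    (let v = outer_factors A *v h0; g = (sgn (g0 \<bullet> v) / norm v) *\<^sub>R v
     in (g, g v* outer_factors A))"

lemma pmap_section_pmap:
  assumes g: "norm g = 1" and nz: "(g \<bullet> g0) * (h \<bullet> h0) \<noteq> 0"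
  shows "pmap_section g0 h0 (pmap (g,h)) = sgn (g \<bullet> g0) *\<^sub>R (g,h)"
proof -
  define a where "a = g \<bullet> g0"
  define b where "b = h \<bullet> h0"
  have "b \<noteq> 0" using nz by (simp add: b_def)
  then have "sgn (b * a) / \<bar>b\<bar> * b = sgn a"
    by (cases "0 < b") (auto simp: sgn_mult)
  moreover have "outer_factors (pmap (g,h)) *v h0 = b *\<^sub>R g"
    using outer_factors_pmap_apply(1)[OF g] by (simp add: b_def inner_commute)
  moreover have "g \<bullet> g = 1"
    using g by (simp flip: power2_norm_eq_inner)
  ultimately show ?thesis
    using g by (simp add: pmap_section_def outer_factors_pmap_apply(2) a_def inner_commute)
qed

definition pmap_section_domain :: "real^4 \<Rightarrow> real^4 \<Rightarrow> (real^4^4) set" where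
  "pmap_section_domain g0 h0 = {A \<in> SO4. g0 \<bullet> (outer_factors A *v h0) \<noteq> 0}"

lemma inner_outer_factors_pmap:
  "x \<in> Sp1 \<times> Sp1 \<Longrightarrow> g0 \<bullet> (outer_factors (pmap x) *v h0) = (fst x \<bullet> g0) * (snd x \<bullet> h0)"
  by (cases x) (simp add: Sp1_def outer_factors_pmap_apply inner_commute)

lemma openin_pmap_section_domain: "openin (top_of_set SO4) (pmap_section_domain g0 h0)"
proof -
  have "continuous_on SO4 (\<lambda>A. g0 \<bullet> (outer_factors A *v h0))"
    by (intro continuous_intros)
  from continuous_openin_preimage_gen[OF this, of "- {0}"] show ?thesis
    by (simp add: pmap_section_domain_def vimage_def Int_def open_Compl)
qed

lemma continuous_on_pmap_section:
  "continuous_on (pmap_section_domain g0 h0) (pmap_section g0 h0)"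
proof -
  have "outer_factors A *v h0 \<noteq> 0" if "A \<in> pmap_section_domain g0 h0" for A
    using that by (auto simp: pmap_section_domain_def)
  then show ?thesis
    unfolding pmap_section_def Let_def
    by (intro continuous_intros) (auto simp: pmap_section_domain_def)
qed

lemma pmap_section_in_fibre:
  assumes "A \<in> pmap_section_domain g0 h0"
  shows "pmap_section g0 h0 A \<in> Sp1 \<times> Sp1" "pmap (pmap_section g0 h0 A) = A"
proof -
  obtain x where x: "x \<in> Sp1 \<times> Sp1" "A = pmap x"
    using assms unfolding pmap_section_domain_def pmap_image[symmetric] by blast
  then have nz: "(fst x \<bullet> g0) * (snd x \<bullet> h0) \<noteq> 0"
    using assms inner_outer_factors_pmap by (simp add: pmap_section_domain_def)
  then have "pmap_section g0 h0 A = sgn (fst x \<bullet> g0) *\<^sub>R x"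
    using x pmap_section_pmap[of "fst x" g0 "snd x" h0] by (cases x) (auto simp: Sp1_def)
  moreover have "sgn (fst x \<bullet> g0) = 1 \<or> sgn (fst x \<bullet> g0) = -1"
    using nz by (auto simp: sgn_if)
  ultimately show "pmap_section g0 h0 A \<in> Sp1 \<times> Sp1" "pmap (pmap_section g0 h0 A) = A"
    using x pmap_uminus by auto
qed

lemma pmap_covering: "covering_space (Sp1 \<times> Sp1) pmap SO4"
proof (rule covering_space_antipodal)
  show "continuous_on (Sp1 \<times> Sp1) pmap" by (rule continuous_on_pmap)
  show "pmap ` (Sp1 \<times> Sp1) = SO4" by (rule pmap_image)
  show "0 \<notin> Sp1 \<times> Sp1" by (simp add: Sp1_def zero_prod_def)
  show "\<And>x. x \<in> Sp1 \<times> Sp1 \<Longrightarrow> - x \<in> Sp1 \<times> Sp1" by simp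
  show "\<And>x y. x \<in> Sp1 \<times> Sp1 \<Longrightarrow> y \<in> Sp1 \<times> Sp1 \<Longrightarrow> pmap x = pmap y \<longleftrightarrow> y = x \<or> y = - x"
    by (rule pmap_eq_iff)
next
  fix A assume "A \<in> SO4"
  then obtain x0 where x0: "x0 \<in> Sp1 \<times> Sp1" "A = pmap x0"
    unfolding pmap_image[symmetric] by blast
  then obtain g0 h0 where "A = pmap (g0,h0)" "norm g0 = 1" "norm h0 = 1"
    by (cases x0) (auto simp: Sp1_def)
  then have "A \<in> pmap_section_domain g0 h0"
    using \<open>A \<in> SO4\<close> inner_outer_factors_pmap[of "(g0,h0)"]
    by (simp add: pmap_section_domain_def Sp1_def flip: power2_norm_eq_inner)
  then show "\<exists>V \<sigma>. A \<in> V \<and> openin (top_of_set SO4) V \<and> continuous_on V \<sigma> \<and>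
           \<sigma> ` V \<subseteq> Sp1 \<times> Sp1 \<and> (\<forall>B\<in>V. pmap (\<sigma> B) = B)"
  proof (intro exI conjI)
    show "pmap_section g0 h0 ` pmap_section_domain g0 h0 \<subseteq> Sp1 \<times> Sp1"
      by (rule image_subsetI) (rule pmap_section_in_fibre(1))
  qed (simp_all add: openin_pmap_section_domain continuous_on_pmap_section pmap_section_in_fibre(2))
qed

section \<open>The involution T and its fixed points\<close>

lemma Tmap_eq: "Tmap (g,h) = (qcnj g, qmult (qmult (- qj) (qcnj h)) qj)"
  by (simp add: Tmap_def qinv_unit vec4_eq_iff)

lemma Tmap_uminus: "Tmap (- x) = - Tmap x"
  by (cases x) (simp add: Tmap_eq vec4_eq_iff)

lemma Tmap_Tmap: "Tmap (Tmap x) = x"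
  by (cases x) (simp add: Tmap_eq vec4_eq_iff)

lemma Tmap_in_Sp1_Times: "x \<in> Sp1 \<times> Sp1 \<Longrightarrow> Tmap x \<in> Sp1 \<times> Sp1"
  by (cases x) (auto simp: Tmap_eq Sp1_def norm_qmult)

lemma continuous_on_Tmap [continuous_intros]:
  "continuous_on S f \<Longrightarrow> continuous_on S (\<lambda>x. Tmap (f x))"
  unfolding Tmap_def by (intro continuous_intros) (simp add: qj_def)

lemma Tmap_eq_uminus_iff:
  assumes "x \<in> Sp1 \<times> Sp1"
  shows "Tmap x = - x \<longleftrightarrow> x \<in> X1 \<union> Y1"
proof
  obtain g h where x: "x = (g,h)" and g: "norm g = 1" and h: "norm h = 1"
    using assms by (cases x) (auto simp: Sp1_def)
  assume "Tmap x = - x"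
  then have a: "g$1 = 0" "h$1 = 0" "h$2 = 0" "h$4 = 0"
    by (auto simp: x Tmap_eq vec4_eq_iff)
  then have "h$3^2 = 1" "g$2^2 + g$3^2 + g$4^2 = 1"
    using unit_vec4_sum_squares[OF h] unit_vec4_sum_squares[OF g] by simp_all
  moreover have "g = vector [0, g$2, g$3, g$4]" "h = qj \<or> h = - qj"
    using a \<open>h$3^2 = 1\<close> by (auto simp: vec4_eq_iff power2_eq_1_iff)
  ultimately show "x \<in> X1 \<union> Y1"
    unfolding x X1_def Y1_def by blast
next
  assume "x \<in> X1 \<union> Y1"
  then show "Tmap x = - x"
    by (auto simp: X1_def Y1_def Tmap_eq vec4_eq_iff)
qed

lemma X1_Y1_subset_Sp1_Times: "X1 \<union> Y1 \<subseteq> Sp1 \<times> Sp1"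
  by (auto simp: X1_def Y1_def Sp1_def norm_eq_sqrt_inner inner_vec4 power2_eq_square)

lemma Tmap_X1_Y1: "x \<in> X1 \<union> Y1 \<Longrightarrow> Tmap x = - x"
  using Tmap_eq_uminus_iff X1_Y1_subset_Sp1_Times by blast

lemma X1_Y1_disjoint: "X1 \<inter> Y1 = {}"
  by (auto simp: X1_def Y1_def vec4_eq_iff)

lemma uminus_Y1: "x \<in> Y1 \<Longrightarrow> - x \<in> X1"
proof -
  assume "x \<in> Y1"
  then obtain b c d where "x = (vector [0,b,c,d], - qj)" "b^2 + c^2 + d^2 = 1"
    by (auto simp: Y1_def)
  then show "- x \<in> X1"
    unfolding X1_def
    by (intro CollectI exI[of _ "-b"] exI[of _ "-c"] exI[of _ "-d"]) (simp add: vec4_eq_iff)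
qed

lemma snd_X1: "x \<in> X1 \<Longrightarrow> snd x $ 3 = 1"
  and snd_Y1: "x \<in> Y1 \<Longrightarrow> snd x $ 3 = -1"
  by (auto simp: X1_def Y1_def)

lemma qj_qj_in_X1: "(qj,qj) \<in> X1"
  unfolding X1_def by (intro CollectI exI[of _ 0] exI[of _ 1]) (simp add: vec4_eq_iff)

lemma path_connected_X1: "path_connected X1"
proof -
  define f :: "real^3 \<Rightarrow> (real^4) \<times> (real^4)" where
    "f v = (v$1 *\<^sub>R qi + v$2 *\<^sub>R qj + v$3 *\<^sub>R qk, qj)" for v
  have norm3: "norm v = 1 \<longleftrightarrow> v$1^2 + v$2^2 + v$3^2 = 1" for v :: "real^3"
    by (simp add: norm_eq_sqrt_inner inner_vec_def sum_3 power2_eq_square)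
  have "X1 = f ` sphere 0 1"
  proof
    show "X1 \<subseteq> f ` sphere 0 1"
    proof
      fix x assume "x \<in> X1"
      then obtain b c d where "x = f (vector [b,c,d])" "b^2 + c^2 + d^2 = 1"
        by (auto simp: X1_def f_def vec4_eq_iff)
      then show "x \<in> f ` sphere 0 1"
        using norm3[of "vector [b,c,d]"] by auto
    qed
    show "f ` sphere 0 1 \<subseteq> X1"
    proof
      fix x assume "x \<in> f ` sphere 0 1"
      then obtain v :: "real^3" where "norm v = 1" "x = (vector [0, v$1, v$2, v$3], qj)"
        by (auto simp: f_def vec4_eq_iff)
      then show "x \<in> X1"
        using norm3 unfolding X1_def by blast
    qed
  qed
  moreover have "continuous_on (sphere 0 1) f"
    unfolding f_def by (intro continuous_intros)
  moreover have "path_connected (sphere (0::real^3) 1)"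
    by (simp add: path_connected_sphere)
  ultimately show ?thesis
    by (metis path_connected_continuous_image)
qed

lemma wmat_eq_pmap: "wmat = pmap (q1,qj)"
  unfolding matrix_eq pmap_apply_unit[OF norm_q1]
  by (simp add: vec4_eq_iff matrix_vector_mult_def sum_4 wmat_def)

lemma diag1m1_eq_pmap: "diag1m1 = pmap (qj,qj)"
  unfolding matrix_eq pmap_apply_unit[OF norm_qj]
  by (simp add: vec4_eq_iff matrix_vector_mult_def sum_4 diag1m1_def)

lemma wmat_conj_pmap:
  assumes "x \<in> Sp1 \<times> Sp1"
  shows "wmat ** pmap x ** matrix_inv wmat = matrix_inv (pmap (Tmap x))"
proof -
  obtain g h where x: "x = (g,h)" and g: "norm g = 1" and h: "norm h = 1"
    using assms by (cases x) (auto simp: Sp1_def)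
  have "qcnj (qmult (qmult (- qj) (qcnj h)) qj) = qmult (qmult (qcnj qj) h) qj"
    by (simp add: vec4_eq_iff algebra_simps)
  then show ?thesis
    using g h by (simp add: x wmat_eq_pmap matrix_inv_pmap pmap_mult norm_qmult qmult_assoc Tmap_eq)
qed

lemma matrix_inv_SO4: "A \<in> SO4 \<Longrightarrow> matrix_inv A = transpose A"
  by (intro matrix_inv_unique) (simp add: SO4_def orthogonal_matrix_def)

lemma matrix_inv_SO4_inj: "A \<in> SO4 \<Longrightarrow> B \<in> SO4 \<Longrightarrow> matrix_inv A = matrix_inv B \<Longrightarrow> A = B"
  by (metis matrix_inv_SO4 transpose_transpose)

section \<open>Lifts of symmetric loops\<close>

lemma is_liftD:
  assumes "is_lift L W"
  shows "continuous_on UNIV L" "L k \<in> Sp1 \<times> Sp1" "pmap (L k) = W k"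
  using assms unfolding is_lift_def by blast+

lemma is_liftI:
  assumes "continuous_on UNIV L" "\<And>k. L k \<in> Sp1 \<times> Sp1" "\<And>k. pmap (L k) = W k"
  shows "is_lift L W"
  using assms unfolding is_lift_def by blast

lemma is_lift_in_SO4: "is_lift L W \<Longrightarrow> W k \<in> SO4"
  by (metis is_liftD(2,3) pmap_in_SO4)

lemma is_lift_continuous:
  assumes L: "is_lift L W"
  shows "continuous_on UNIV W"
proof -
  have "continuous_on UNIV (\<lambda>k. pmap (L k))"
    by (rule continuous_on_compose2[OF continuous_on_pmap is_liftD(1)[OF L]])
      (simp add: image_subset_iff is_liftD(2)[OF L])
  moreover have "(\<lambda>k. pmap (L k)) = W"
    using is_liftD(3)[OF L] by auto
  ultimately show ?thesis by metis
qed

lemma lift_unique: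
  assumes L1: "is_lift L1 W" and L2: "is_lift L2 W" and eq: "L1 a = L2 a"
  shows "L1 = L2"
proof
  fix k
  show "L1 k = L2 k"
    by (rule covering_space_lift_unique[where ?g1.0 = L1 and ?g2.0 = L2 and T = UNIV,
          OF pmap_covering eq is_lift_continuous[OF L1]])
      (simp_all add: Pi_iff is_lift_in_SO4[OF L1] is_liftD[OF L1] is_liftD[OF L2])
qed

lemma is_lift_uminus: "is_lift L W \<Longrightarrow> is_lift (\<lambda>k. - L k) W"
  by (auto simp: is_lift_def pmap_uminus intro: continuous_intros)

lemma pmap_Tmap_symmetric_loop:
  assumes V: "symmetric_loop V" and x: "x \<in> Sp1 \<times> Sp1" and e: "pmap x = V k"
  shows "pmap (Tmap x) = V (-k)"
proof (rule matrix_inv_SO4_inj)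
  show "pmap (Tmap x) \<in> SO4" "V (-k) \<in> SO4"
    using x V by (auto intro: pmap_in_SO4 Tmap_in_Sp1_Times simp: symmetric_loop_def)
  show "matrix_inv (pmap (Tmap x)) = matrix_inv (V (-k))"
    using wmat_conj_pmap[OF x] V e by (simp add: symmetric_loop_def)
qed

lemma is_lift_reflect:
  assumes V: "symmetric_loop W" and L: "is_lift L W"
  shows "is_lift (\<lambda>k. - Tmap (L (-k))) W"
proof (rule is_liftI)
  show "continuous_on UNIV (\<lambda>k. - Tmap (L (-k)))"
    by (intro continuous_intros continuous_on_compose2[OF is_liftD(1)[OF L]]) auto
  show "- Tmap (L (-k)) \<in> Sp1 \<times> Sp1" for k
    using is_liftD(2)[OF L] by (simp add: Tmap_in_Sp1_Times)
  show "pmap (- Tmap (L (-k))) = W k" for k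
    using pmap_Tmap_symmetric_loop[OF V is_liftD(2,3)[OF L]] by (simp add: pmap_uminus)
qed

lemma lift_antisymmetric:
  assumes V: "symmetric_loop W" and L: "is_lift L W" and L0: "L 0 \<in> X1 \<union> Y1"
  shows "Tmap (L (-k)) = - L k"
proof -
  have "(\<lambda>k. - Tmap (L (-k))) = L"
    using Tmap_X1_Y1[OF L0] by (intro lift_unique[OF is_lift_reflect[OF V L] L, of 0]) simp
  then show ?thesis by (metis minus_minus)
qed

lemma lift_at_symmetric_point:
  assumes V: "symmetric_loop V" and L: "is_lift L V" and k: "V (-k) = V k"
  shows "Tmap (L k) = L k \<or> Tmap (L k) = - L k"
  using pmap_Tmap_symmetric_loop[OF V is_liftD(2,3)[OF L]] k is_liftD(3)[OF L]
    pmap_eq_iff[OF is_liftD(2)[OF L] Tmap_in_Sp1_Times[OF is_liftD(2)[OF L]]]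
  by metis

lemma symmetric_loop_periodic: "symmetric_loop V \<Longrightarrow> V (k + 2*pi) = V k"
  by (simp add: symmetric_loop_def)

lemma symmetric_loop_at_pi: "symmetric_loop V \<Longrightarrow> V (-pi) = V pi"
  using symmetric_loop_periodic[of V "-pi"] by simp

text \<open>A null-homotopy of \<open>W\<close> lifts to one of the path \<open>L\<close> on \<open>[0,2\<pi>]\<close>, so
  \<open>L (2\<pi>) = L 0\<close>; the shifted lift then agrees with \<open>L\<close> everywhere.\<close>
lemma lift_periodic:
  assumes per: "\<And>k. W (k + 2*pi) = W k" and N: "null_homotopic_loop W" and L: "is_lift L W"
  shows "L (k + 2*pi) = L k"
proof -
  define g where "g t = W (2*pi*t)" for t
  define c where "c = linepath (W 0) (W 0)"
  have "homotopic_loops SO4 g c"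
    using N by (simp add: null_homotopic_loop_def g_def[abs_def] c_def)
  then have hp: "homotopic_paths SO4 g c"
    using homotopic_loops_imp_homotopic_paths_null by (fastforce simp: g_def c_def pathstart_def)
  have "homotopic_paths (Sp1 \<times> Sp1) (\<lambda>t. L (2*pi*t)) (linepath (L 0) (L 0))"
  proof (rule covering_space_lift_homotopic_paths[OF pmap_covering _ _ _ _ hp])
    show "path g" "path_image g \<subseteq> SO4" "path c" "path_image c \<subseteq> SO4"
      using homotopic_paths_imp_path[OF hp] homotopic_paths_imp_subset[OF hp] by auto
    show "path (\<lambda>t. L (2*pi*t))"
      unfolding path_def by (intro continuous_on_compose2[OF is_liftD(1)[OF L]] continuous_intros) auto
    show "path (linepath (L 0) (L 0))" by simp
    show "path_image (\<lambda>t. L (2*pi*t)) \<subseteq> Sp1 \<times> Sp1" "path_image (linepath (L 0) (L 0)) \<subseteq> Sp1 \<times> Sp1"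
      by (simp_all add: path_image_def image_subset_iff is_liftD(2)[OF L] linepath_refl)
    show "pmap (L (2*pi*t)) = g t" "pmap (linepath (L 0) (L 0) t) = c t" for t
      by (simp_all add: is_liftD(3)[OF L] g_def c_def linepath_refl)
  qed (simp add: pathstart_def)
  then have "L (2*pi) = L 0"
    using homotopic_paths_imp_pathfinish by (fastforce simp: pathfinish_def linepath_refl)
  moreover have "is_lift (\<lambda>k. L (k + 2*pi)) W"
    using per is_liftD[OF L]
    by (intro is_liftI continuous_on_compose2[OF is_liftD(1)[OF L]] continuous_intros) auto
  ultimately show ?thesis
    using lift_unique[OF _ L, of "\<lambda>k. L (k + 2*pi)" 0] by (simp add: fun_eq_iff)
qed

lemma lift_at_pi:
  assumes V: "symmetric_loop W" and N: "null_homotopic_loop W" and L: "is_lift L W"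
    and L0: "L 0 \<in> X1 \<union> Y1"
  shows "L pi \<in> X1 \<union> Y1"
proof -
  have "Tmap (L pi) = - L (- pi)"
    using lift_antisymmetric[OF V L L0, of "- pi"] by simp
  also have "L (- pi) = L pi"
    using lift_periodic[OF symmetric_loop_periodic[OF V] N L, of "- pi"] by simp
  finally show ?thesis
    using Tmap_eq_uminus_iff is_liftD(2)[OF L] by blast
qed

section \<open>The obstruction\<close>

lemma lift_symmetric_homotopy:
  assumes H: "symmetric_homotopy H" and x0: "x0 \<in> Sp1 \<times> Sp1" "pmap x0 = H (0,0)"
  obtains G where "G (0,0) = x0" "continuous_on (UNIV \<times> {0..1}) G"
    "\<And>t. t \<in> {0..1} \<Longrightarrow> is_lift (\<lambda>k. G (k,t)) (\<lambda>k. H (k,t))"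
proof -
  let ?U = "UNIV \<times> {0..1::real}"
  have slice: "symmetric_loop (\<lambda>k. H (k,t))" if "t \<in> {0..1}" for t
    using H that by (simp add: symmetric_homotopy_def)
  have "convex ?U" by (simp add: convex_Times)
  moreover have "continuous_on ?U H"
    using H by (simp add: symmetric_homotopy_def)
  moreover have "H (k,t) \<in> SO4" if "t \<in> {0..1}" for k t
    using slice[OF that] by (auto simp: symmetric_loop_def)
  then have "H \<in> ?U \<rightarrow> SO4" by auto
  ultimately obtain G where G: "continuous_on ?U G" "G \<in> ?U \<rightarrow> Sp1 \<times> Sp1" "G (0,0) = x0"
      "\<And>y. y \<in> ?U \<Longrightarrow> pmap (G y) = H y"
    using covering_space_lift_strong[OF pmap_covering x0(1) _ convex_imp_simply_connected
        convex_imp_locally_path_connected, where U = ?U and z = "(0,0)" and f = H] x0(2)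
    by auto
  have "is_lift (\<lambda>k. G (k,t)) (\<lambda>k. H (k,t))" if "t \<in> {0..1}" for t
  proof (rule is_liftI)
    show "continuous_on UNIV (\<lambda>k. G (k,t))"
      by (rule continuous_on_compose2[OF G(1)]) (use that in \<open>auto intro: continuous_intros\<close>)
    show "G (k,t) \<in> Sp1 \<times> Sp1" "pmap (G (k,t)) = H (k,t)" for k
      using G(2,4) that unfolding Pi_def by auto
  qed
  with G show ?thesis by (intro that) auto
qed

lemma continuous_two_valued_eq:
  fixes f :: "'a::topological_space \<Rightarrow> real"
  assumes "connected C" "continuous_on C f" "f ` C \<subseteq> {a, b}" "s \<in> C" "t \<in> C"
  shows "f s = f t"
proof -
  have "f constant_on C"
    using assms by (intro continuous_finite_range_constant) (auto intro: finite_subset)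
  with assms(4,5) show ?thesis by (auto simp: constant_on_def)
qed

text \<open>On the fixed points of \<open>\<plusminus>T\<close>, the function \<open>\<langle>T x, x\<rangle> = \<plusminus>2\<close> separates the
  fixed points of \<open>-T\<close>, and the sign of the \<open>j\<close>-component separates \<open>X1\<close> from \<open>Y1\<close>.\<close>
lemma connected_fixed_points_X1_or_Y1:
  assumes C: "connected C" and c: "continuous_on C c" "c ` C \<subseteq> Sp1 \<times> Sp1"
    and fixed: "\<And>t. t \<in> C \<Longrightarrow> Tmap (c t) = c t \<or> Tmap (c t) = - c t"
    and t0: "t0 \<in> C" "c t0 \<in> X1 \<union> Y1"
  shows "c ` C \<subseteq> X1 \<or> c ` C \<subseteq> Y1"
proof -
  define \<phi> where "\<phi> x = fst (Tmap x) \<bullet> fst x + snd (Tmap x) \<bullet> snd x" for x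
  have \<phi>: "\<phi> (c t) = 2" if "t \<in> C" "Tmap (c t) = c t" for t
    using that c(2) unfolding \<phi>_def by (auto simp: Sp1_def simp flip: power2_norm_eq_inner)
  have \<phi>': "\<phi> (c t) = -2" if "t \<in> C" "Tmap (c t) = - c t" for t
    using that c(2) unfolding \<phi>_def by (auto simp: Sp1_def simp flip: power2_norm_eq_inner)
  have "continuous_on C (\<lambda>t. \<phi> (c t))"
    unfolding \<phi>_def by (intro continuous_intros c)
  moreover have "(\<lambda>t. \<phi> (c t)) ` C \<subseteq> {2, -2}"
    using \<phi> \<phi>' fixed by fastforce
  moreover have "\<phi> (c t0) = -2"
    using t0 Tmap_X1_Y1 by (intro \<phi>') auto
  ultimately have "\<phi> (c t) = -2" if "t \<in> C" for t
    using continuous_two_valued_eq[OF C _ _ that t0(1)] by metis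
  then have XY: "c t \<in> X1 \<union> Y1" if "t \<in> C" for t
    using that fixed[OF that] \<phi>[OF that] c(2) Tmap_eq_uminus_iff by fastforce
  have "continuous_on C (\<lambda>t. snd (c t) $ 3)"
    by (intro continuous_intros c)
  moreover have "(\<lambda>t. snd (c t) $ 3) ` C \<subseteq> {1, -1}"
    using XY snd_X1 snd_Y1 by blast
  ultimately have j: "snd (c t) $ 3 = snd (c t0) $ 3" if "t \<in> C" for t
    using continuous_two_valued_eq[OF C _ _ that t0(1)] by metis
  show ?thesis
  proof (cases "c t0 \<in> X1")
    case True
    then have "c t \<in> X1" if "t \<in> C" for t
      using XY[OF that] j[OF that] snd_X1 snd_Y1 by fastforce
    then show ?thesis by blast
  next
    case False
    then have "c t \<in> Y1" if "t \<in> C" for t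
      using XY[OF that] j[OF that] t0(2) snd_X1 snd_Y1 by fastforce
    then show ?thesis by blast
  qed
qed

lemma lift_of_constant:
  assumes "is_lift L (\<lambda>k. A)"
  shows "L k = L 0"
proof -
  have "is_lift (\<lambda>k. L 0) (\<lambda>k. A)"
    using is_liftD[OF assms] by (intro is_liftI) auto
  then show ?thesis
    using lift_unique[OF _ assms, of "\<lambda>k. L 0" 0] by (metis)
qed

text \<open>At \<open>k = 0, \<pi>\<close> every loop of a symmetric homotopy satisfies \<open>V (-k) = V k\<close>, so the
  lift there is fixed by \<open>\<plusminus>T\<close> and cannot move from \<open>X1\<close> to \<open>Y1\<close>.\<close>
lemma lifted_homotopy_X1_iff:
  assumes H: "symmetric_homotopy H" and contG: "continuous_on (UNIV \<times> {0..1}) G"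
    and slice: "\<And>t. t \<in> {0..1} \<Longrightarrow> is_lift (\<lambda>k. G (k,t)) (\<lambda>k. H (k,t))"
    and k: "k = 0 \<or> k = pi" and Gk0: "G (k,0) \<in> X1 \<union> Y1"
  shows "G (k,1) \<in> X1 \<longleftrightarrow> G (k,0) \<in> X1"
proof -
  have "(\<lambda>t. G (k,t)) ` {0..1} \<subseteq> X1 \<or> (\<lambda>t. G (k,t)) ` {0..1} \<subseteq> Y1"
  proof (rule connected_fixed_points_X1_or_Y1)
    show "continuous_on {0..1} (\<lambda>t. G (k,t))"
      by (rule continuous_on_compose2[OF contG]) (auto intro: continuous_intros)
    show "(\<lambda>t. G (k,t)) ` {0..1} \<subseteq> Sp1 \<times> Sp1"
      using is_liftD(2)[OF slice] by blast
    show "Tmap (G (k,t)) = G (k,t) \<or> Tmap (G (k,t)) = - G (k,t)" if "t \<in> {0..1}" for t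
    proof (rule lift_at_symmetric_point[OF _ slice[OF that]])
      show Ht: "symmetric_loop (\<lambda>k. H (k,t))"
        using H that by (simp add: symmetric_homotopy_def)
      show "H (-k,t) = H (k,t)"
        using k symmetric_loop_at_pi[OF Ht] by auto
    qed
  qed (use Gk0 in auto)
  moreover have "G (k,0) \<in> (\<lambda>t. G (k,t)) ` {0..1}" "G (k,1) \<in> (\<lambda>t. G (k,t)) ` {0..1}"
    by auto
  ultimately show ?thesis
    using X1_Y1_disjoint by blast
qed

lemma sym_homotopic_diag1m1_imp_X1:
  assumes V: "symmetric_loop W" and L: "is_lift L W" and L0: "L 0 \<in> X1"
    and Lpi: "L pi \<in> X1 \<union> Y1" and SH: "sym_homotopic W (\<lambda>k. diag1m1)"
  shows "L pi \<in> X1"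
proof -
  obtain H where H: "symmetric_homotopy H" and H0: "\<And>k. H (k,0) = W k"
    and H1: "\<And>k. H (k,1) = diag1m1"
    using SH by (auto simp: sym_homotopic_def)
  have "pmap (L 0) = H (0,0)"
    using is_liftD(3)[OF L] H0 by simp
  then obtain G where G00: "G (0,0) = L 0" and contG: "continuous_on (UNIV \<times> {0..1}) G"
    and slice: "\<And>t. t \<in> {0..1} \<Longrightarrow> is_lift (\<lambda>k. G (k,t)) (\<lambda>k. H (k,t))"
    using lift_symmetric_homotopy[OF H is_liftD(2)[OF L]] by blast
  have "(\<lambda>k. G (k,0)) = L"
    using slice[of 0] H0 G00 by (intro lift_unique[OF _ L, of "\<lambda>k. G (k,0)" 0]) simp_all
  then have G0: "G (k,0) = L k" for k by metis
  have "is_lift (\<lambda>k. G (k,1)) (\<lambda>k. diag1m1)"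
    using slice[of 1] H1 by simp
  then have "G (pi,1) = G (0,1)"
    by (rule lift_of_constant)
  have X1_iff: "G (k,1) \<in> X1 \<longleftrightarrow> G (k,0) \<in> X1" if "k = 0 \<or> k = pi" for k
    by (rule lifted_homotopy_X1_iff[OF H contG slice]) (use that G0 L0 Lpi in auto)
  have "G (0,1) \<in> X1"
    using X1_iff[of 0] G0 L0 by simp
  with \<open>G (pi,1) = G (0,1)\<close> show ?thesis
    using X1_iff[of pi] G0 by simp
qed

section \<open>Construction of the symmetric homotopy\<close>

text \<open>First to a path inside \<open>X\<close> with the same ends, using simple connectivity of \<open>S\<close>,
  then inside \<open>X\<close> by contracting the parameter interval.\<close>
lemma homotopic_to_constant_ends_in:
  fixes p :: "real \<Rightarrow> 'a::real_normed_vector"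
  assumes S: "simply_connected S" and X: "path_connected X" "X \<subseteq> S"
    and p: "path p" "path_image p \<subseteq> S" "pathstart p \<in> X" "pathfinish p \<in> X" and e: "e \<in> X"
  shows "homotopic_with_canon (\<lambda>h. h 0 \<in> X \<and> h 1 \<in> X) {0..1} S p (\<lambda>s. e)"
proof -
  let ?P = "\<lambda>h. h 0 \<in> X \<and> h 1 \<in> X"
  obtain q where q: "path q" "path_image q \<subseteq> X" "pathstart q = pathstart p" "pathfinish q = pathfinish p"
    using X(1) p(3,4) unfolding path_connected_def by metis
  have "homotopic_paths S p q"
    using S p(1,2) q X(2) by (auto simp: simply_connected_eq_homotopic_paths)
  then have pq: "homotopic_with_canon ?P {0..1} S p q"
    unfolding homotopic_paths_def
    by (rule homotopic_with_mono) (use p(3,4) in \<open>simp add: pathstart_def pathfinish_def\<close>)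
  have "continuous_on {0..1} q" "q \<in> {0..1} \<rightarrow> X" "contractible {0..1::real}"
    using q(1,2) by (auto simp: path_def path_image_def convex_imp_contractible)
  then obtain c where qc: "homotopic_with_canon (\<lambda>h. True) {0..1} X q (\<lambda>s. c)"
    by (rule nullhomotopic_from_contractible)
  then have "c \<in> X"
    using homotopic_with_imp_subset2 by fastforce
  then have "path_component X c e"
    using X(1) e by (simp add: path_connected_component)
  then have "homotopic_with_canon (\<lambda>h. True) {0..1} X (\<lambda>s. c) (\<lambda>s. e)"
    by (simp add: homotopic_constant_maps path_component_of_canon_iff)
  with qc have "homotopic_with_canon (\<lambda>h. True) {0..1} X q (\<lambda>s. e)"
    by (rule homotopic_with_trans)
  then have "homotopic_with_canon ?P {0..1} X q (\<lambda>s. e)"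
    by (rule homotopic_with_mono) (auto simp: continuous_map_subtopology_eu)
  then have "homotopic_with_canon ?P {0..1} S q (\<lambda>s. e)"
    using X(2) by (rule homotopic_with_subset_right)
  with pq show ?thesis
    by (rule homotopic_with_trans)
qed

lemma arccos_cos_bounds: "0 \<le> arccos (cos k) \<and> arccos (cos k) \<le> pi"
  using arccos_bounded[of "cos k"] by simp

lemma arccos_cos_sin_eq_0: "sin k = 0 \<Longrightarrow> arccos (cos k) = 0 \<or> arccos (cos k) = pi"
  using sin_cos_squared_add[of k] by (auto simp: power2_eq_1_iff)

lemma arccos_cos_mod_2pi:
  obtains n :: int where "k = (if 0 \<le> sin k then arccos (cos k) else - arccos (cos k)) + 2 * pi * n"
proof -
  define a where "a = arccos (cos k)"
  have "sin a = sqrt ((sin k)^2)"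
    by (simp add: a_def sin_arccos sin_squared_eq)
  then have "sin a = \<bar>sin k\<bar>" by simp
  moreover have "cos a = cos k" by (simp add: a_def)
  ultimately have "sin k = sin (if 0 \<le> sin k then a else - a) \<and> cos k = cos (if 0 \<le> sin k then a else - a)"
    by auto
  then show ?thesis
    using that sin_cos_eq_iff by (metis a_def)
qed

lemma periodic_2pi_int:
  assumes "\<And>k. f (k + 2*pi) = f k"
  shows "f (k + 2 * pi * of_int n) = f k"
proof (induction n rule: int_induct[where k = 0])
  case (step1 i)
  have "f (k + 2 * pi * of_int (i + 1)) = f ((k + 2 * pi * of_int i) + 2 * pi)"
    by (simp add: algebra_simps)
  with step1 assms show ?case by simp
next
  case (step2 i)
  have "f (k + 2 * pi * of_int i) = f ((k + 2 * pi * of_int (i - 1)) + 2 * pi)"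
    by (simp add: algebra_simps)
  with step2 assms show ?case by simp
qed simp

text \<open>\<open>F (t, s)\<close> is a homotopy of paths on \<open>[0, \<pi>]\<close>, with \<open>s \<in> [0,1]\<close> standing for the
  angle \<open>\<pi> s\<close>. The circle is folded onto \<open>[0, \<pi>]\<close> by \<open>k \<mapsto> arccos (cos k)\<close>, and on the
  half where \<open>sin k < 0\<close> the path is reflected by \<open>-T\<close>.\<close>
definition sym_extension :: "(real \<times> real \<Rightarrow> (real^4) \<times> (real^4)) \<Rightarrow> real \<times> real \<Rightarrow> (real^4) \<times> (real^4)"
  where "sym_extension F = (\<lambda>(k,t). if 0 \<le> sin k then F (t, arccos (cos k) / pi)
                                   else - Tmap (F (t, arccos (cos k) / pi)))"

lemma sym_extension_periodic: "sym_extension F (k + 2*pi, t) = sym_extension F (k, t)"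
  by (simp add: sym_extension_def)

lemma
  assumes ends: "\<And>t. t \<in> {0..1} \<Longrightarrow> Tmap (F (t,0)) = - F (t,0) \<and> Tmap (F (t,1)) = - F (t,1)"
  shows sym_extension_antisymmetric:
      "t \<in> {0..1} \<Longrightarrow> sym_extension F (-k, t) = - Tmap (sym_extension F (k, t))"
    and continuous_on_sym_extension:
      "continuous_on ({0..1} \<times> {0..1}) F \<Longrightarrow> continuous_on (UNIV \<times> {0..1}) (sym_extension F)"
proof -
  have ends': "Tmap (F (t, arccos (cos k) / pi)) = - F (t, arccos (cos k) / pi)"
    if "t \<in> {0..1}" "sin k = 0" for k t
    using arccos_cos_sin_eq_0[OF that(2)] ends[OF that(1)] by auto
  show "t \<in> {0..1} \<Longrightarrow> sym_extension F (-k, t) = - Tmap (sym_extension F (k, t))"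
    using ends'[of t k] by (cases "sin k" rule: linorder_cases)
      (auto simp: sym_extension_def Tmap_uminus Tmap_Tmap)
  assume contF: "continuous_on ({0..1} \<times> {0..1}) F"
  have fold: "continuous_on A (\<lambda>y. F (snd y, arccos (cos (fst y)) / pi))"
    if "A \<subseteq> UNIV \<times> {0..1}" for A
    by (rule continuous_on_compose2[OF contF])
      (use that arccos_cos_bounds in \<open>auto intro!: continuous_intros simp: divide_simps\<close>)
  show "continuous_on (UNIV \<times> {0..1}) (sym_extension F)"
    unfolding sym_extension_def case_prod_beta
  proof (rule continuous_on_cases_le[where h = "\<lambda>y. - sin (fst y)" and a = 0, simplified])
    show "continuous_on {y \<in> UNIV \<times> {0..1}. 0 \<le> sin (fst y)} (\<lambda>y. F (snd y, arccos (cos (fst y)) / pi))"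
      by (rule fold) auto
    show "continuous_on {y \<in> UNIV \<times> {0..1}. sin (fst y) \<le> 0} (\<lambda>y. - Tmap (F (snd y, arccos (cos (fst y)) / pi)))"
      by (intro continuous_intros fold) auto
  qed (use ends' in \<open>auto intro!: continuous_intros\<close>)
qed

lemma symmetric_loop_pmap:
  assumes L: "continuous_on UNIV L" "\<And>k. L k \<in> Sp1 \<times> Sp1"
    and per: "\<And>k. L (k + 2*pi) = L k" and anti: "\<And>k. L (-k) = - Tmap (L k)"
  shows "symmetric_loop (\<lambda>k. pmap (L k))"
  unfolding symmetric_loop_def
proof (intro conjI allI)
  show "continuous_on UNIV (\<lambda>k. pmap (L k))"
    by (rule continuous_on_compose2[OF continuous_on_pmap L(1)]) (use L(2) in blast)
  show "range (\<lambda>k. pmap (L k)) \<subseteq> SO4"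
    using L(2) pmap_in_SO4 by blast
  show "pmap (L (k + 2*pi)) = pmap (L k)" for k
    by (simp add: per)
  show "wmat ** pmap (L k) ** matrix_inv wmat = matrix_inv (pmap (L (-k)))" for k
    by (simp add: wmat_conj_pmap L(2) anti pmap_uminus)
qed

lemma sym_extension_restrict:
  assumes per: "\<And>k. L (k + 2*pi) = L k" and anti: "\<And>k. Tmap (L (-k)) = - L k"
  shows "sym_extension (\<lambda>(t,s). L (pi * s)) (k, t) = L k"
proof -
  obtain n :: int where n: "k = (if 0 \<le> sin k then arccos (cos k) else - arccos (cos k)) + 2 * pi * n"
    by (rule arccos_cos_mod_2pi)
  have "L k = L (if 0 \<le> sin k then arccos (cos k) else - arccos (cos k))"
    by (subst n) (rule periodic_2pi_int[where f = L, OF per])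
  moreover have "L (- a) = - Tmap (L a)" for a
    using anti[of a] by (metis Tmap_Tmap Tmap_uminus)
  ultimately show ?thesis
    by (simp add: sym_extension_def)
qed

lemma symmetric_homotopy_sym_extension:
  assumes contF: "continuous_on ({0..1} \<times> {0..1}) F" and FS: "F \<in> {0..1} \<times> {0..1} \<rightarrow> Sp1 \<times> Sp1"
    and ends: "\<And>t. t \<in> {0..1} \<Longrightarrow> Tmap (F (t,0)) = - F (t,0) \<and> Tmap (F (t,1)) = - F (t,1)"
  shows "symmetric_homotopy (\<lambda>y. pmap (sym_extension F y))"
  unfolding symmetric_homotopy_def
proof (intro conjI ballI)
  have GS: "sym_extension F (k,t) \<in> Sp1 \<times> Sp1" if "t \<in> {0..1}" for k t
    using FS that arccos_cos_bounds[of k] Tmap_in_Sp1_Times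
    by (auto simp: sym_extension_def Pi_iff divide_simps)
  have contG: "continuous_on (UNIV \<times> {0..1}) (sym_extension F)"
    using ends contF by (rule continuous_on_sym_extension)
  moreover have "sym_extension F ` (UNIV \<times> {0..1}) \<subseteq> Sp1 \<times> Sp1"
  proof
    fix y assume "y \<in> sym_extension F ` (UNIV \<times> {0..1})"
    then obtain k t where "y = sym_extension F (k,t)" "t \<in> {0..1}" by auto
    then show "y \<in> Sp1 \<times> Sp1" using GS by blast
  qed
  ultimately show "continuous_on (UNIV \<times> {0..1}) (\<lambda>y. pmap (sym_extension F y))"
    by (rule continuous_on_compose2[OF continuous_on_pmap])
  show "symmetric_loop (\<lambda>k. pmap (sym_extension F (k,t)))" if "t \<in> {0..1}" for t
  proof (rule symmetric_loop_pmap)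
    show "continuous_on UNIV (\<lambda>k. sym_extension F (k,t))"
      by (rule continuous_on_compose2[OF contG]) (use that in \<open>auto intro: continuous_intros\<close>)
  qed (use that GS sym_extension_antisymmetric[OF ends] in \<open>simp_all add: sym_extension_periodic\<close>)
qed

lemma X1_imp_sym_homotopic_diag1m1:
  assumes V: "symmetric_loop W" and N: "null_homotopic_loop W" and L: "is_lift L W"
    and L0: "L 0 \<in> X1" and Lpi: "L pi \<in> X1"
  shows "sym_homotopic W (\<lambda>k. diag1m1)"
proof -
  define p where "p s = L (pi * s)" for s
  have "path p"
    unfolding path_def p_def by (intro continuous_on_compose2[OF is_liftD(1)[OF L]] continuous_intros) auto
  moreover have "path_image p \<subseteq> Sp1 \<times> Sp1"
    using is_liftD(2)[OF L] by (simp add: path_image_def image_subset_iff p_def)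
  ultimately have "homotopic_with_canon (\<lambda>h. h 0 \<in> X1 \<and> h 1 \<in> X1) {0..1} (Sp1 \<times> Sp1) p (\<lambda>s. (qj,qj))"
    using L0 Lpi X1_Y1_subset_Sp1_Times qj_qj_in_X1
    by (intro homotopic_to_constant_ends_in path_connected_X1)
      (auto simp: Sp1_eq_sphere simply_connected_Times simply_connected_sphere p_def
        pathstart_def pathfinish_def)
  then obtain F :: "real \<times> real \<Rightarrow> (real^4) \<times> (real^4)"
    where contF: "continuous_on ({0..1} \<times> {0..1}) F"
      and FS: "F \<in> {0..1} \<times> {0..1} \<rightarrow> Sp1 \<times> Sp1"
      and F0: "\<forall>s\<in>{0..1}. F (0,s) = p s" and F1: "\<forall>s\<in>{0..1}. F (1,s) = (qj,qj)"
      and Fends: "\<forall>t\<in>{0..1}. F (t,0) \<in> X1 \<and> F (t,1) \<in> X1"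
    by (auto simp: homotopic_with)
  define H where "H y = pmap (sym_extension F y)" for y
  have "symmetric_homotopy H"
    unfolding H_def using contF FS Fends Tmap_X1_Y1
    by (intro symmetric_homotopy_sym_extension) blast+
  moreover have "H (k,0) = W k" for k
  proof -
    have "sym_extension F (k,0) = sym_extension (\<lambda>(t,s). L (pi * s)) (k,0)"
      using F0 arccos_cos_bounds[of k] by (simp add: sym_extension_def divide_simps p_def)
    also have "\<dots> = L k"
      using L0 lift_periodic[OF symmetric_loop_periodic[OF V] N L] lift_antisymmetric[OF V L]
      by (intro sym_extension_restrict) auto
    finally show ?thesis
      by (simp add: H_def is_liftD(3)[OF L])
  qed
  moreover have "H (k,1) = diag1m1" for k
    using F1 arccos_cos_bounds[of k] Tmap_X1_Y1[OF UnI1[OF qj_qj_in_X1]]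
    by (simp add: H_def sym_extension_def diag1m1_eq_pmap divide_simps)
  ultimately show ?thesis
    unfolding sym_homotopic_def by blast
qed

theorem theorem3:
  fixes W :: "real \<Rightarrow> real^4^4"
  assumes "symmetric_loop W"
    and "null_homotopic_loop W"
    and "\<exists>Wt. is_lift Wt W \<and> Tmap (Wt 0) = (- fst (Wt 0), - snd (Wt 0))"
  shows "(\<exists>Wt. is_lift Wt W \<and> Wt 0 \<in> X1) \<and>
         (\<forall>Wt. is_lift Wt W \<and> Wt 0 \<in> X1 \<longrightarrow>
            Wt pi \<in> X1 \<union> Y1 \<and> X1 \<inter> Y1 = {} \<and>
            (sym_homotopic W (\<lambda>k. diag1m1) \<longleftrightarrow> Wt pi \<in> X1) \<and>
            (Wt pi \<in> Y1 \<longrightarrow> \<not> sym_homotopic W (\<lambda>k. diag1m1)))"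
proof (intro conjI allI impI)
  note V = assms(1) and N = assms(2)
  obtain L where L: "is_lift L W" and "Tmap (L 0) = (- fst (L 0), - snd (L 0))"
    using assms(3) by blast
  then have "Tmap (L 0) = - L 0"
    by (cases "L 0") simp
  then have "L 0 \<in> X1 \<union> Y1"
    using Tmap_eq_uminus_iff[OF is_liftD(2)[OF L]] by blast
  then show "\<exists>Wt. is_lift Wt W \<and> Wt 0 \<in> X1"
    using L is_lift_uminus[OF L] uminus_Y1 by blast
  fix Wt assume "is_lift Wt W \<and> Wt 0 \<in> X1"
  then have Wt: "is_lift Wt W" and Wt0: "Wt 0 \<in> X1" by auto
  show Wtpi: "Wt pi \<in> X1 \<union> Y1"
    using lift_at_pi[OF V N Wt] Wt0 by blast
  show "X1 \<inter> Y1 = {}"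
    by (rule X1_Y1_disjoint)
  show iff: "sym_homotopic W (\<lambda>k. diag1m1) \<longleftrightarrow> Wt pi \<in> X1"
    using sym_homotopic_diag1m1_imp_X1[OF V Wt Wt0 Wtpi] X1_imp_sym_homotopic_diag1m1[OF V N Wt Wt0]
    by blast
  show "Wt pi \<in> Y1 \<Longrightarrow> \<not> sym_homotopic W (\<lambda>k. diag1m1)"
    using iff X1_Y1_disjoint by blast
qed

end
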